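(* Let $0\le r,r'<p^2-1$ and $\lambda,\lambda'\in\overline{\mathbb{F}}_p^\times$. Then $\psi_{r,\lambda}$ is equivalent to $\psi_{r',\lambda'}$ (conjugate by an element of $\mathrm{GL}_2(\overline{\mathbb{F}}_p)$) if and only if either $r'=r$ and $\lambda'=\lambda$, or $r'\equiv-pr\pmod{p^2-1}$ and $\lambda'=\lambda^{-1}$.
   Context: $p$ odd prime; $\mathcal{G}_F=\mathrm{Gal}(\overline{\mathbb{Q}}_p/F)$, $\mathbb{Q}_{p^2}$ unramified quadratic; $\mathrm{Fr}_p\in\mathcal{G}_{\mathbb{Q}_p}$ a fixed geometric Frobenius lift. $\omega_2$: character of $\mathcal{G}_{\mathbb{Q}_{p^2}}$, on inertia $h\mapsto$ reduction of $h(\sqrt[p^2-1]{p})/\sqrt[p^2-1]{p}$, with $\omega_2(\mathrm{Fr}_p^2)=1$; $\mu_{2,\lambda}$ unramified with $\mathrm{Fr}_p^2\mapsto\lambda$. ${}^LG=\mathrm{GL}_2(\overline{\mathbb{F}}_p)\rtimes\mathcal{G}_{\mathbb{Q}_p}$ with $\mathcal{G}_{\mathbb{Q}_{p^2}}$ acting trivially and $\mathrm{Fr}_pg\mathrm{Fr}_p^{-1}=\Phi_2(g^\top)^{-1}\Phi_2^{-1}$, $\Phi_2=\begin{pmatrix}0&1\\-1&0\end{pmatrix}$. $\psi_{r,\lambda}:\mathcal{G}_{\mathbb{Q}_p}\to{}^LG$ is the homomorphism with $\psi_{r,\lambda}(\mathrm{Fr}_p)=\mathrm{diag}(1,\lambda)\mathrm{Fr}_p$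 and $\psi_{r,\lambda}(h)=\mathrm{diag}\big(\mu_{2,\lambda^{-1}}\omega_2^{r}(h),\mu_{2,\lambda}\omega_2^{-pr}(h)\big)h$ for $h\in\mathcal{G}_{\mathbb{Q}_{p^2}}$. *)

theory Defs
  imports "HOL-Algebra.Group" "HOL-Analysis.Determinants"
    "HOL-Computational_Algebra.Polynomial" "HOL-Number_Theory.Cong"
begin

(* 2x2 matrices over the coefficient field 'k are 'k^2^2; rows/columns indexed 1,2. *)

definition diag2 :: "'k::field \<Rightarrow> 'k \<Rightarrow> 'k^2^2" where
  "diag2 a b = (\<chi> i j. if i = j then (if i = 1 then a else b) else 0)"

definition Phi2 :: "'k::field^2^2" where
  "Phi2 = (\<chi> i j. if i = 1 \<and> j = 2 then 1 else if i = 2 \<and> j = 1 then -1 else 0)"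

(* action of an element of the Galois group on GL_2 inside the L-group:
   trivial on G_{Q_{p^2}} (the subgroup H), and g \<mapsto> Phi2 (g^T)^{-1} Phi2^{-1}
   on the nontrivial coset (that of Fr_p). *)
definition Lact :: "'g set \<Rightarrow> 'g \<Rightarrow> 'k::field^2^2 \<Rightarrow> 'k^2^2" where
  "Lact H \<sigma> B = (if \<sigma> \<in> H then B
                 else Phi2 ** matrix_inv (transpose B) ** matrix_inv Phi2)"

(* multiplication in  ^LG = GL_2 \<rtimes> G_{Q_p}, elements written (A, \<sigma>) = A \<sigma> *)
definition Lmult :: "('g, 'b) monoid_scheme \<Rightarrow> 'g set \<Rightarrow>
    (('k::field^2^2) \<times> 'g) \<Rightarrow> (('k^2^2) \<times> 'g) \<Rightarrow> (('k^2^2) \<times> 'g)" where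
  "Lmult G H x y = (fst x ** Lact H (snd x) (fst y), snd x \<otimes>\<^bsub>G\<^esub> snd y)"

(* Abstract description of the Galois-theoretic data:
   G = G_{Q_p}, H = G_{Q_{p^2}} (index 2), I = inertia subgroup,
   Fr = the fixed geometric Frobenius lift, om2 = \<omega>_2 (a character of H),
   mu \<lambda> = \<mu>_{2,\<lambda>} (unramified character of H with Fr^2 \<mapsto> \<lambda>). *)
definition galois_datum ::
  "nat \<Rightarrow> ('g, 'b) monoid_scheme \<Rightarrow> 'g set \<Rightarrow> 'g set \<Rightarrow> 'g \<Rightarrow>
   ('g \<Rightarrow> 'k::field) \<Rightarrow> ('k \<Rightarrow> 'g \<Rightarrow> 'k) \<Rightarrow> bool" where
  "galois_datum p G H I Fr om2 mu \<longleftrightarrow>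
     group G \<and> subgroup H G \<and> subgroup I G \<and> I \<subseteq> H \<and>
     Fr \<in> carrier G \<and> Fr \<notin> H \<and>
     (\<forall>x\<in>carrier G. x \<notin> H \<longrightarrow> x \<otimes>\<^bsub>G\<^esub> inv\<^bsub>G\<^esub> Fr \<in> H) \<and>
     (\<forall>x\<in>carrier G. \<forall>i\<in>I. x \<otimes>\<^bsub>G\<^esub> i \<otimes>\<^bsub>G\<^esub> inv\<^bsub>G\<^esub> x \<in> I) \<and>
     \<comment> \<open>omega_2\<close>
     (\<forall>h\<in>H. \<forall>k\<in>H. om2 (h \<otimes>\<^bsub>G\<^esub> k) = om2 h * om2 k) \<and>
     (\<forall>h\<in>H. om2 h ^ (p\<^sup>2 - 1) = 1) \<and>
     om2 ` I = {z. z ^ (p\<^sup>2 - 1) = 1} \<and>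
     om2 (Fr \<otimes>\<^bsub>G\<^esub> Fr) = 1 \<and>
     (\<forall>h\<in>H. om2 (Fr \<otimes>\<^bsub>G\<^esub> h \<otimes>\<^bsub>G\<^esub> inv\<^bsub>G\<^esub> Fr) = om2 h ^ p) \<and>
     \<comment> \<open>unramified characters mu_{2,lambda}\<close>
     (\<forall>l. l \<noteq> 0 \<longrightarrow>
        (\<forall>h\<in>H. \<forall>k\<in>H. mu l (h \<otimes>\<^bsub>G\<^esub> k) = mu l h * mu l k) \<and>
        (\<forall>i\<in>I. mu l i = 1) \<and>
        mu l (Fr \<otimes>\<^bsub>G\<^esub> Fr) = l \<and>
        (\<forall>h\<in>H. mu l (Fr \<otimes>\<^bsub>G\<^esub> h \<otimes>\<^bsub>G\<^esub> inv\<^bsub>G\<^esub> Fr) = mu l h)) \<and>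
     (\<forall>l l'. l \<noteq> 0 \<longrightarrow> l' \<noteq> 0 \<longrightarrow> (\<forall>h\<in>H. mu (l * l') h = mu l h * mu l' h))"

definition psi ::
  "nat \<Rightarrow> ('g, 'b) monoid_scheme \<Rightarrow> 'g set \<Rightarrow> 'g \<Rightarrow> ('g \<Rightarrow> 'k::field) \<Rightarrow>
   ('k \<Rightarrow> 'g \<Rightarrow> 'k) \<Rightarrow> nat \<Rightarrow> 'k \<Rightarrow> 'g \<Rightarrow> (('k^2^2) \<times> 'g)" where
  "psi p G H Fr om2 mu r l \<sigma> =
     (let psiH = (\<lambda>h. (diag2 (mu (inverse l) h * om2 h ^ r)
                              (mu l h * inverse (om2 h) ^ (p * r)), h))
      in if \<sigma> \<in> H then psiH \<sigma>
         else Lmult G H (psiH (\<sigma> \<otimes>\<^bsub>G\<^esub> inv\<^bsub>G\<^esub> Fr)) (diag2 1 l, Fr))"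

definition L_equivalent ::
  "('g, 'b) monoid_scheme \<Rightarrow> 'g set \<Rightarrow> ('g \<Rightarrow> ('k::field^2^2) \<times> 'g) \<Rightarrow>
   ('g \<Rightarrow> ('k^2^2) \<times> 'g) \<Rightarrow> bool" where
  "L_equivalent G H f f' \<longleftrightarrow>
     (\<exists>g::'k^2^2. invertible g \<and>
        (\<forall>\<sigma>\<in>carrier G. Lmult G H (Lmult G H (g, \<one>\<^bsub>G\<^esub>) (f \<sigma>)) (matrix_inv g, \<one>\<^bsub>G\<^esub>) = f' \<sigma>))"

end

theory Submission
  imports Defs
begin

text \<open>
  On the index-two subgroup H = G_{Q_{p^2}} the parameter \<psi>_{r,\<lambda>} is diagonal, with entries the
  characters \<chi>1 = \<mu>_{\<lambda>^{-1}} \<omega>_2^r and \<chi>2 = \<mu>_\<lambda> \<omega>_2^{-pr}. A matrix conjugating one diagonal family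
  into another is diagonal or antidiagonal, so an equivalence matches the characters either in
  order or swapped. On inertia \<omega>_2 runs through all (p^2-1)-th roots of unity, which are
  distinct because p does not divide p^2-1; this recovers r modulo p^2-1, and evaluating at
  Fr^2 recovers \<lambda>. Conversely, the swap is realised by the antidiagonal matrix with entries c,
  where c^2 = -\<lambda>^{-1} absorbs the sign coming from \<Phi>_2 on the Frobenius coset.
\<close>

definition mat2 :: "'k::field \<Rightarrow> 'k \<Rightarrow> 'k \<Rightarrow> 'k \<Rightarrow> 'k^2^2" where
  "mat2 a b c d = (\<chi> i j. if i = 1 then (if j = 1 then a else b) else (if j = 1 then c else d))"

lemma mat2_nth [simp]:
  "mat2 a b c d $ 1 $ 1 = a" "mat2 a b c d $ 1 $ 2 = b"
  "mat2 a b c d $ 2 $ 1 = c" "mat2 a b c d $ 2 $ 2 = d"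
  by (simp_all add: mat2_def)

lemma mat2_eq_iff: "mat2 a b c d = mat2 a' b' c' d' \<longleftrightarrow> a = a' \<and> b = b' \<and> c = c' \<and> d = d'"
  unfolding mat2_def vec_eq_iff forall_2 by simp

lemma mat2_cases: obtains a b c d where "(M::'k::field^2^2) = mat2 a b c d"
proof
  show "M = mat2 (M$1$1) (M$1$2) (M$2$1) (M$2$2)"
    unfolding mat2_def vec_eq_iff forall_2 by simp
qed

lemma mat2_mult:
  "mat2 a b c d ** mat2 a' b' c' d' =
     mat2 (a*a' + b*c') (a*b' + b*d') (c*a' + d*c') (c*b' + d*d')"
  unfolding matrix_matrix_mult_def mat2_def by (simp add: vec_eq_iff sum_2 forall_2)

lemma diag2_eq_mat2: "diag2 a b = mat2 a 0 0 b"
  unfolding diag2_def mat2_def by (simp add: vec_eq_iff forall_2)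

lemma Phi2_eq_mat2: "Phi2 = mat2 0 1 (-1) 0"
  unfolding Phi2_def mat2_def by (simp add: vec_eq_iff forall_2)

lemma mat1_eq_mat2: "mat 1 = mat2 1 0 0 1"
  unfolding mat_def mat2_def by (simp add: vec_eq_iff forall_2)

lemma transpose_mat2: "transpose (mat2 a b c d) = mat2 a c b d"
  unfolding transpose_def mat2_def by (simp add: vec_eq_iff forall_2)

lemma det_mat2: "det (mat2 a b c d) = a * d - b * c"
  by (simp add: det_2)

lemma matrix_inv_left:
  fixes A :: "'k::field^'n^'n"
  assumes "invertible A"
  shows "matrix_inv A ** A = mat 1"
proof -
  have "\<exists>A'. A ** A' = mat 1 \<and> A' ** A = mat 1"
    using assms by (simp add: invertible_def)
  then have "A ** matrix_inv A = mat 1 \<and> matrix_inv A ** A = mat 1"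
    unfolding matrix_inv_def by (rule someI_ex)
  then show ?thesis ..
qed

lemma matrix_inv_unique:
  fixes A :: "'k::field^'n^'n"
  assumes "A ** B = mat 1"
  shows "matrix_inv A = B"
proof -
  have "B ** A = mat 1"
    using assms matrix_left_right_inverse by blast
  then have inv: "invertible A"
    using assms invertible_def by blast
  have "matrix_inv A = matrix_inv A ** (A ** B)"
    by (simp add: assms matrix_mul_rid)
  also have "\<dots> = B"
    by (simp add: matrix_mul_assoc matrix_inv_left[OF inv] matrix_mul_lid)
  finally show ?thesis .
qed

lemma matrix_inv_mat1: "matrix_inv (mat 1 :: 'k::field^'n^'n) = mat 1"
  by (rule matrix_inv_unique) (simp add: matrix_mul_lid)

lemma matrix_inv_antidiag2:
  "(c::'k::field) \<noteq> 0 \<Longrightarrow> matrix_inv (mat2 0 c c 0) = mat2 0 (inverse c) (inverse c) 0"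
  by (rule matrix_inv_unique) (simp add: mat2_mult mat1_eq_mat2)

lemma matrix_inv_Phi2: "matrix_inv (Phi2 :: 'k::field^2^2) = mat2 0 (-1) 1 0"
  by (rule matrix_inv_unique) (simp add: Phi2_eq_mat2 mat2_mult mat1_eq_mat2)

lemma invertible_conj_diag2_cases:
  fixes g :: "'k::field^2^2"
  assumes "invertible g"
    and conj: "\<forall>h\<in>S. g ** diag2 (a h) (b h) ** matrix_inv g = diag2 (a' h) (b' h)"
  shows "(\<forall>h\<in>S. a' h = a h \<and> b' h = b h) \<or> (\<forall>h\<in>S. a' h = b h \<and> b' h = a h)"
proof -
  obtain x y u v where g: "g = mat2 x y u v"
    using mat2_cases by blast
  have "x * v - y * u \<noteq> 0"
    using assms(1) by (simp add: invertible_det_nz g det_mat2)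
  then have nondeg: "(x \<noteq> 0 \<and> v \<noteq> 0) \<or> (y \<noteq> 0 \<and> u \<noteq> 0)"
    by auto
  have "mat2 (x * a h) (y * b h) (u * a h) (v * b h) = mat2 (a' h * x) (a' h * y) (b' h * u) (b' h * v)"
    if "h \<in> S" for h
  proof -
    have "g ** diag2 (a h) (b h) = g ** diag2 (a h) (b h) ** matrix_inv g ** g"
      by (simp add: matrix_mul_assoc[symmetric] matrix_inv_left[OF assms(1)] matrix_mul_rid)
    also have "\<dots> = diag2 (a' h) (b' h) ** g"
      using conj that by simp
    finally show ?thesis
      by (simp add: g diag2_eq_mat2 mat2_mult)
  qed
  then show ?thesis
    using nondeg by (auto simp: mat2_eq_iff)
qed

lemma antidiag2_conj_diag2:
  "(c::'k::field) \<noteq> 0 \<Longrightarrow> mat2 0 c c 0 ** diag2 a b ** matrix_inv (mat2 0 c c 0) = diag2 b a"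
  by (simp add: matrix_inv_antidiag2 diag2_eq_mat2 mat2_mult mat2_eq_iff)

lemma antidiag2_twisted_conj:
  fixes c :: "'k::field"
  assumes "c * c * l = -1"
  shows "mat2 0 c c 0 ** (diag2 a b ** diag2 1 l) ** mat2 0 (-c) (-c) 0 = diag2 b a ** diag2 1 (inverse l)"
proof -
  have "l * - (c * c) = 1"
    using assms by (simp add: algebra_simps)
  then have "- (c * c) = inverse l"
    by (metis inverse_unique)
  then show ?thesis
    using assms by (simp add: diag2_eq_mat2 mat2_mult mat2_eq_iff algebra_simps)
qed

lemma power_gcd_eq_1:
  fixes x :: "'a::monoid_mult"
  assumes "x ^ a = 1" and "x ^ b = 1"
  shows "x ^ gcd a b = 1"
proof (cases "a = 0")
  case True
  then show ?thesis using assms by simp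
next
  case False
  then obtain s t where "a * s = b * t + gcd a b"
    using bezout_nat by blast
  then have "x ^ (a * s) = x ^ (b * t) * x ^ gcd a b"
    by (simp add: power_add)
  then show ?thesis
    using assms by (simp add: power_mult)
qed

text \<open>The roots of 1 + w + \<dots> + w^(m-1) are m-th roots of unity, and 1 is not among them since m \<noteq> 0 in 'k.\<close>

lemma exists_root_of_unity_neq_1:
  assumes "2 \<le> m" and "of_nat m \<noteq> (0::'k::alg_closed_field)"
  shows "\<exists>w::'k. w ^ m = 1 \<and> w \<noteq> 1"
proof -
  have "\<exists>w::'k. (\<Sum>i\<le>m - 1. 1 * w ^ i) = 0"
    by (rule alg_closed) (use assms in auto)
  moreover have "{..m - 1} = {..<m}"
    using assms by auto
  ultimately obtain w :: 'k where w: "(\<Sum>i<m. w ^ i) = 0"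
    by auto
  then have "w ^ m = 1"
    using power_diff_1_eq[of w m] by simp
  moreover have "w \<noteq> 1"
    using w assms(2) by auto
  ultimately show ?thesis by blast
qed

lemma dvd_if_roots_of_unity_power_eq_1:
  fixes N e :: nat
  assumes "0 < N" and char: "of_nat N \<noteq> (0::'k::alg_closed_field)"
    and roots: "\<And>z::'k. z ^ N = 1 \<Longrightarrow> z ^ e = 1"
  shows "N dvd e"
proof -
  define d where "d = gcd N e"
  have "d dvd N" and "0 < d"
    using assms(1) by (simp_all add: d_def)
  then obtain m where N: "N = d * m"
    by blast
  have "m = 1"
  proof (rule ccontr)
    assume "m \<noteq> 1"
    moreover have "m \<noteq> 0" using N assms(1) by auto
    ultimately have "2 \<le> m" by linarith
    moreover have "of_nat m \<noteq> (0::'k)" using char N by auto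
    ultimately obtain w :: 'k where w: "w ^ m = 1" "w \<noteq> 1"
      using exists_root_of_unity_neq_1 by blast
    obtain z :: 'k where z: "z ^ d = w"
      using nth_root_exists \<open>0 < d\<close> by blast
    have "z ^ N = 1"
      using w z by (simp add: N power_mult)
    then have "z ^ d = 1"
      unfolding d_def using roots power_gcd_eq_1 by blast
    then show False
      using w z by simp
  qed
  then have "d = N"
    using N by simp
  then show ?thesis
    unfolding d_def by (metis gcd_dvd2)
qed

lemma cong_if_roots_of_unity_power_eq:
  fixes N a b :: nat
  assumes "0 < N" and "of_nat N \<noteq> (0::'k::alg_closed_field)"
    and roots: "\<And>z::'k. z ^ N = 1 \<Longrightarrow> z ^ a = z ^ b"
  shows "[a = b] (mod N)"
proof -
  \<comment> \<open>The exponent (N - 1) * b stands for -b modulo N.\<close>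
  have Nb: "b + (N - 1) * b = N * b"
    using assms(1) by (cases N) simp_all
  have "N dvd a + (N - 1) * b"
  proof (rule dvd_if_roots_of_unity_power_eq_1[OF assms(1,2)])
    fix z :: 'k assume z: "z ^ N = 1"
    have "z ^ (a + (N - 1) * b) = z ^ (b + (N - 1) * b)"
      using roots[OF z] by (simp add: power_add)
    also have "\<dots> = (z ^ N) ^ b"
      by (simp only: Nb power_mult)
    finally show "z ^ (a + (N - 1) * b) = 1"
      using z by simp
  qed
  then have "[a + (N - 1) * b = 0] (mod N)"
    by (simp add: cong_0_iff)
  moreover have "[b + (N - 1) * b = 0] (mod N)"
    unfolding Nb by (simp add: cong_0_iff)
  ultimately have "[a + (N - 1) * b = b + (N - 1) * b] (mod N)"
    by (meson cong_sym cong_trans)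
  then show ?thesis
    by (simp only: cong_add_rcancel_nat)
qed

lemma power_eq_inverse_power_if_dvd:
  fixes w :: "'k::field"
  assumes "w ^ N = 1" and "N dvd a + b"
  shows "w ^ a = inverse w ^ b"
proof -
  have "w ^ a * w ^ b = 1"
    using assms by (auto simp: power_add[symmetric] power_mult elim!: dvdE)
  then show ?thesis
    by (metis inverse_unique mult.commute power_inverse)
qed

lemma Lact_mat1: "Lact H \<sigma> (mat 1 :: 'k::field^2^2) = mat 1"
  unfolding Lact_def transpose_mat matrix_inv_mat1 matrix_mul_rid matrix_inv_Phi2
  by (simp add: Phi2_eq_mat2 mat2_mult mat1_eq_mat2)

lemma Lact_inv_antidiag2:
  "\<sigma> \<notin> H \<Longrightarrow> (c::'k::field) \<noteq> 0 \<Longrightarrow> Lact H \<sigma> (matrix_inv (mat2 0 c c 0)) = mat2 0 (-c) (-c) 0"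
  unfolding Lact_def matrix_inv_Phi2
  by (simp add: matrix_inv_antidiag2 transpose_mat2 Phi2_eq_mat2 mat2_mult)

lemma Lmult_conj:
  assumes "monoid G" and "\<one>\<^bsub>G\<^esub> \<in> H" and "\<sigma> \<in> carrier G"
  shows "Lmult G H (Lmult G H (g, \<one>\<^bsub>G\<^esub>) (X, \<sigma>)) (g', \<one>\<^bsub>G\<^esub>) = (g ** X ** Lact H \<sigma> g', \<sigma>)"
  using assms by (simp add: Lmult_def Lact_def monoid.l_one monoid.r_one)

lemma L_equivalent_refl:
  fixes f :: "'g \<Rightarrow> ('k::field^2^2) \<times> 'g"
  assumes "monoid G" and "\<one>\<^bsub>G\<^esub> \<in> H" and "\<And>\<sigma>. \<sigma> \<in> carrier G \<Longrightarrow> snd (f \<sigma>) = \<sigma>"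
  shows "L_equivalent G H f f"
  unfolding L_equivalent_def
proof (intro exI conjI ballI)
  show "invertible (mat 1 :: 'k^2^2)"
    by (simp add: invertible_det_nz)
  fix \<sigma> assume \<sigma>: "\<sigma> \<in> carrier G"
  then obtain X where "f \<sigma> = (X, \<sigma>)"
    using assms(3) by (metis prod.collapse)
  then show "Lmult G H (Lmult G H (mat 1, \<one>\<^bsub>G\<^esub>) (f \<sigma>)) (matrix_inv (mat 1), \<one>\<^bsub>G\<^esub>) = f \<sigma>"
    using Lmult_conj[OF assms(1,2) \<sigma>, of "mat 1" X "mat 1"]
    by (simp add: matrix_inv_mat1 Lact_mat1 matrix_mul_lid matrix_mul_rid)
qed

locale psi_setting =
  fixes p :: nat and G :: "('g, 'b) monoid_scheme" and H I :: "'g set" and Fr :: 'g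
    and om2 :: "'g \<Rightarrow> 'k::alg_closed_field" and mu :: "'k \<Rightarrow> 'g \<Rightarrow> 'k"
  assumes prime: "prime p" and char: "CHAR('k) = p"
    and datum: "galois_datum p G H I Fr om2 mu"
begin

abbreviation \<psi> :: "nat \<Rightarrow> 'k \<Rightarrow> 'g \<Rightarrow> ('k^2^2) \<times> 'g" where
  "\<psi> \<equiv> psi p G H Fr om2 mu"

definition chi1 :: "nat \<Rightarrow> 'k \<Rightarrow> 'g \<Rightarrow> 'k" where
  "chi1 r l h = mu (inverse l) h * om2 h ^ r"

definition chi2 :: "nat \<Rightarrow> 'k \<Rightarrow> 'g \<Rightarrow> 'k" where
  "chi2 r l h = mu l h * inverse (om2 h) ^ (p * r)"

lemma group_G: "group G"
  using datum unfolding galois_datum_def by (elim conjE)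

lemma subgroup_H: "subgroup H G"
  using datum unfolding galois_datum_def by (elim conjE)

lemma inertia_subset_H: "I \<subseteq> H"
  using datum unfolding galois_datum_def by (elim conjE)

lemma Fr_carrier: "Fr \<in> carrier G"
  using datum unfolding galois_datum_def by (elim conjE)

lemma Fr_notin_H: "Fr \<notin> H"
  using datum unfolding galois_datum_def by (elim conjE)

lemma mult_inv_Fr_in_H: "\<sigma> \<in> carrier G \<Longrightarrow> \<sigma> \<notin> H \<Longrightarrow> \<sigma> \<otimes>\<^bsub>G\<^esub> inv\<^bsub>G\<^esub> Fr \<in> H"
  using datum unfolding galois_datum_def by simp

lemma om2_power_order: "h \<in> H \<Longrightarrow> om2 h ^ (p\<^sup>2 - 1) = 1"
  using datum unfolding galois_datum_def by simp

lemma om2_inertia: "om2 ` I = {z. z ^ (p\<^sup>2 - 1) = 1}"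
  using datum unfolding galois_datum_def by (elim conjE)

lemma om2_Fr_sq: "om2 (Fr \<otimes>\<^bsub>G\<^esub> Fr) = 1"
  using datum unfolding galois_datum_def by (elim conjE)

lemma mu_inertia: "l \<noteq> 0 \<Longrightarrow> i \<in> I \<Longrightarrow> mu l i = 1"
  using datum unfolding galois_datum_def by simp

lemma mu_Fr_sq: "l \<noteq> 0 \<Longrightarrow> mu l (Fr \<otimes>\<^bsub>G\<^esub> Fr) = l"
  using datum unfolding galois_datum_def by simp

lemma monoid_G: "monoid G"
  using group_G by (rule group.is_monoid)

lemma one_in_H: "\<one>\<^bsub>G\<^esub> \<in> H"
  using subgroup_H by (rule subgroup.one_closed)

lemma Fr_sq_in_H: "Fr \<otimes>\<^bsub>G\<^esub> Fr \<in> H"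
proof (rule ccontr)
  interpret group G
    by (rule group_G)
  assume "Fr \<otimes>\<^bsub>G\<^esub> Fr \<notin> H"
  then have "Fr \<otimes>\<^bsub>G\<^esub> Fr \<otimes>\<^bsub>G\<^esub> inv\<^bsub>G\<^esub> Fr \<in> H"
    using mult_inv_Fr_in_H Fr_carrier m_closed by blast
  also have "Fr \<otimes>\<^bsub>G\<^esub> Fr \<otimes>\<^bsub>G\<^esub> inv\<^bsub>G\<^esub> Fr = Fr"
    using Fr_carrier by (simp add: m_assoc)
  finally show False
    using Fr_notin_H by contradiction
qed

lemma om2_inertia_onto: "z ^ (p\<^sup>2 - 1) = 1 \<Longrightarrow> \<exists>i\<in>I. om2 i = z"
  using om2_inertia by (metis (mono_tags, lifting) imageE mem_Collect_eq)

lemma p_sq_minus_1_pos: "0 < p\<^sup>2 - 1"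
proof -
  have "1 < p"
    using prime by (rule prime_gt_1_nat)
  then have "1 < p\<^sup>2"
    by (metis one_less_power pos2)
  then show ?thesis by simp
qed

lemma of_nat_p_sq_minus_1_neq_0: "of_nat (p\<^sup>2 - 1) \<noteq> (0::'k)"
proof
  assume "of_nat (p\<^sup>2 - 1) = (0::'k)"
  then have "p dvd p\<^sup>2 - 1"
    using char by (simp add: of_nat_eq_0_iff_char_dvd)
  moreover have "p dvd p\<^sup>2"
    by simp
  ultimately have "p dvd p\<^sup>2 - (p\<^sup>2 - 1)"
    by (simp add: dvd_diff_nat)
  also have "p\<^sup>2 - (p\<^sup>2 - 1) = 1"
    using p_sq_minus_1_pos by simp
  finally show False
    using prime by simp
qed

lemma psi_in_H: "h \<in> H \<Longrightarrow> \<psi> r l h = (diag2 (chi1 r l h) (chi2 r l h), h)"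
  by (simp add: psi_def chi1_def chi2_def)

lemma psi_notin_H:
  assumes "\<sigma> \<in> carrier G" and "\<sigma> \<notin> H"
  shows "\<psi> r l \<sigma> = (diag2 (chi1 r l (\<sigma> \<otimes>\<^bsub>G\<^esub> inv\<^bsub>G\<^esub> Fr)) (chi2 r l (\<sigma> \<otimes>\<^bsub>G\<^esub> inv\<^bsub>G\<^esub> Fr)) ** diag2 1 l, \<sigma>)"
proof -
  interpret group G
    by (rule group_G)
  have "\<sigma> \<otimes>\<^bsub>G\<^esub> inv\<^bsub>G\<^esub> Fr \<otimes>\<^bsub>G\<^esub> Fr = \<sigma>"
    using assms(1) Fr_carrier by (simp add: m_assoc)
  then show ?thesis
    using assms mult_inv_Fr_in_H by (simp add: psi_def chi1_def chi2_def Lmult_def Lact_def)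
qed

lemma snd_psi: "\<sigma> \<in> carrier G \<Longrightarrow> snd (\<psi> r l \<sigma>) = \<sigma>"
  by (cases "\<sigma> \<in> H") (simp_all add: psi_in_H psi_notin_H)

lemma
  assumes "l \<noteq> 0" and "i \<in> I"
  shows chi1_inertia: "chi1 r l i = om2 i ^ r"
    and chi2_inertia: "chi2 r l i = inverse (om2 i) ^ (p * r)"
  using assms by (simp_all add: chi1_def chi2_def mu_inertia)

lemma
  assumes "l \<noteq> 0"
  shows chi1_Fr_sq: "chi1 r l (Fr \<otimes>\<^bsub>G\<^esub> Fr) = inverse l"
    and chi2_Fr_sq: "chi2 r l (Fr \<otimes>\<^bsub>G\<^esub> Fr) = l"
  using assms by (simp_all add: chi1_def chi2_def mu_Fr_sq om2_Fr_sq)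

lemma psi_equivalent_chi_cases:
  assumes "L_equivalent G H (\<psi> r l) (\<psi> r' l')"
  shows "(\<forall>h\<in>H. chi1 r' l' h = chi1 r l h \<and> chi2 r' l' h = chi2 r l h) \<or>
         (\<forall>h\<in>H. chi1 r' l' h = chi2 r l h \<and> chi2 r' l' h = chi1 r l h)"
proof -
  obtain g :: "'k^2^2" where "invertible g" and conj:
    "\<forall>\<sigma>\<in>carrier G. Lmult G H (Lmult G H (g, \<one>\<^bsub>G\<^esub>) (\<psi> r l \<sigma>)) (matrix_inv g, \<one>\<^bsub>G\<^esub>) = \<psi> r' l' \<sigma>"
    using assms unfolding L_equivalent_def by blast
  have "\<forall>h\<in>H. g ** diag2 (chi1 r l h) (chi2 r l h) ** matrix_inv g = diag2 (chi1 r' l' h) (chi2 r' l' h)"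
  proof
    fix h assume "h \<in> H"
    then have h: "h \<in> carrier G"
      using subgroup_H by (simp add: subgroup.mem_carrier)
    have "Lmult G H (Lmult G H (g, \<one>\<^bsub>G\<^esub>) (\<psi> r l h)) (matrix_inv g, \<one>\<^bsub>G\<^esub>) = \<psi> r' l' h"
      using conj h by (rule bspec)
    then have "(g ** diag2 (chi1 r l h) (chi2 r l h) ** Lact H h (matrix_inv g), h) = (diag2 (chi1 r' l' h) (chi2 r' l' h), h)"
      by (simp only: psi_in_H[OF \<open>h \<in> H\<close>] Lmult_conj[OF monoid_G one_in_H h])
    then show "g ** diag2 (chi1 r l h) (chi2 r l h) ** matrix_inv g = diag2 (chi1 r' l' h) (chi2 r' l' h)"
      using \<open>h \<in> H\<close> by (simp add: Lact_def)
  qed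
  then show ?thesis
    by (rule invertible_conj_diag2_cases[OF \<open>invertible g\<close>])
qed

lemma params_eq_if_chi1_eq:
  assumes "r < p\<^sup>2 - 1" and "r' < p\<^sup>2 - 1" and "l \<noteq> 0" and "l' \<noteq> 0"
    and chi1: "\<forall>h\<in>H. chi1 r' l' h = chi1 r l h"
  shows "r' = r \<and> l' = l"
proof
  have "[r' = r] (mod p\<^sup>2 - 1)"
  proof (rule cong_if_roots_of_unity_power_eq[OF p_sq_minus_1_pos of_nat_p_sq_minus_1_neq_0])
    fix z :: 'k assume "z ^ (p\<^sup>2 - 1) = 1"
    then obtain i where "i \<in> I" and "om2 i = z"
      using om2_inertia_onto by blast
    moreover have "chi1 r' l' i = chi1 r l i"
      using chi1 \<open>i \<in> I\<close> inertia_subset_H by (auto dest: bspec)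
    ultimately show "z ^ r' = z ^ r"
      using assms(3,4) by (simp add: chi1_inertia)
  qed
  then show "r' = r"
    using assms(2,1) by (rule cong_less_modulus_unique_nat)
  show "l' = l"
    using chi1[rule_format, OF Fr_sq_in_H] assms(3,4) by (simp add: chi1_Fr_sq)
qed

lemma params_swap_if_chi1_eq_chi2:
  assumes "l \<noteq> 0" and "l' \<noteq> 0"
    and chi: "\<forall>h\<in>H. chi1 r' l' h = chi2 r l h"
  shows "[int r' = - (int p * int r)] (mod int (p\<^sup>2 - 1)) \<and> l' = inverse l"
proof
  have "p\<^sup>2 - 1 dvd r' + p * r"
  proof (rule dvd_if_roots_of_unity_power_eq_1[OF p_sq_minus_1_pos of_nat_p_sq_minus_1_neq_0])
    fix z :: 'k assume z: "z ^ (p\<^sup>2 - 1) = 1"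
    then obtain i where "i \<in> I" and "om2 i = z"
      using om2_inertia_onto by blast
    moreover have "chi1 r' l' i = chi2 r l i"
      using chi \<open>i \<in> I\<close> inertia_subset_H by (auto dest: bspec)
    ultimately have "z ^ r' = inverse z ^ (p * r)"
      using assms(1,2) by (simp add: chi1_inertia chi2_inertia)
    moreover have "z \<noteq> 0"
      using z p_sq_minus_1_pos by (auto simp: zero_power)
    ultimately show "z ^ (r' + p * r) = 1"
      by (simp add: power_add power_inverse)
  qed
  then have "int (p\<^sup>2 - 1) dvd int r' - - (int p * int r)"
    by (metis of_nat_dvd_iff of_nat_add of_nat_mult diff_minus_eq_add minus_minus)
  then show "[int r' = - (int p * int r)] (mod int (p\<^sup>2 - 1))"
    by (simp add: cong_iff_dvd_diff)
  have "inverse l' = l"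
    using chi[rule_format, OF Fr_sq_in_H] assms by (simp add: chi1_Fr_sq chi2_Fr_sq)
  then show "l' = inverse l"
    by auto
qed

lemma chi_swap_if_cong:
  assumes cong: "[int r' = - (int p * int r)] (mod int (p\<^sup>2 - 1))"
    and "l \<noteq> 0" and "l' = inverse l" and "h \<in> H"
  shows "chi1 r' l' h = chi2 r l h \<and> chi2 r' l' h = chi1 r l h"
proof -
  have "int (p\<^sup>2 - 1) dvd int (r' + p * r)"
    using cong by (simp add: cong_iff_dvd_diff)
  then have d1: "p\<^sup>2 - 1 dvd r' + p * r"
    by (simp only: of_nat_dvd_iff)
  have pp: "p * p = (p\<^sup>2 - 1) + 1"
    using p_sq_minus_1_pos by (simp add: power2_eq_square)
  have "p * (r' + p * r) = p * r' + (p * p) * r"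
    by (simp add: algebra_simps)
  also have "\<dots> = (r + p * r') + r * (p\<^sup>2 - 1)"
    unfolding pp by (simp add: algebra_simps)
  finally have "p * (r' + p * r) = (r + p * r') + r * (p\<^sup>2 - 1)" .
  moreover have "p\<^sup>2 - 1 dvd p * (r' + p * r)"
    using d1 by (rule dvd_mult)
  ultimately have d2: "p\<^sup>2 - 1 dvd r + p * r'"
    by simp
  show ?thesis
    using power_eq_inverse_power_if_dvd[OF om2_power_order[OF assms(4)] d1]
      power_eq_inverse_power_if_dvd[OF om2_power_order[OF assms(4)] d2] assms(2,3)
    by (simp add: chi1_def chi2_def)
qed

lemma psi_equivalent_swap:
  assumes "[int r' = - (int p * int r)] (mod int (p\<^sup>2 - 1))"
    and "l \<noteq> 0" and "l' = inverse l"
  shows "L_equivalent G H (\<psi> r l) (\<psi> r' l')"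
proof -
  obtain c :: 'k where "c ^ 2 = - inverse l"
    using nth_root_exists[of 2] by auto
  then have c: "c * c * l = -1"
    using assms(2) by (simp add: power2_eq_square)
  then have "c \<noteq> 0"
    by auto
  have "invertible (mat2 0 c c 0)"
    using \<open>c \<noteq> 0\<close> by (simp add: invertible_det_nz det_mat2)
  moreover have "Lmult G H (Lmult G H (mat2 0 c c 0, \<one>\<^bsub>G\<^esub>) (\<psi> r l \<sigma>)) (matrix_inv (mat2 0 c c 0), \<one>\<^bsub>G\<^esub>)
      = \<psi> r' l' \<sigma>" if \<sigma>: "\<sigma> \<in> carrier G" for \<sigma>
  proof (cases "\<sigma> \<in> H")
    case True
    then show ?thesis
      using chi_swap_if_cong[OF assms True]
      by (simp add: Lmult_conj[OF monoid_G one_in_H \<sigma>] psi_in_H Lact_def antidiag2_conj_diag2 \<open>c \<noteq> 0\<close>)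
  next
    case False
    then show ?thesis
      using chi_swap_if_cong[OF assms mult_inv_Fr_in_H[OF \<sigma> False]]
      by (simp add: Lmult_conj[OF monoid_G one_in_H \<sigma>] psi_notin_H \<sigma> Lact_inv_antidiag2 \<open>c \<noteq> 0\<close> antidiag2_twisted_conj[OF c] assms(3))
  qed
  ultimately show ?thesis
    unfolding L_equivalent_def by blast
qed

lemma psi_equivalent_refl: "L_equivalent G H (\<psi> r l) (\<psi> r l)"
  using monoid_G one_in_H snd_psi by (rule L_equivalent_refl)

end

theorem lemma6p22:
  fixes p :: nat and G :: "('g, 'b) monoid_scheme" and H I :: "'g set" and Fr :: 'g
    and om2 :: "'g \<Rightarrow> 'k::alg_closed_field" and mu :: "'k \<Rightarrow> 'g \<Rightarrow> 'k"
    and r r' :: nat and l l' :: 'k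
  assumes "prime p" and "odd p"
    and "CHAR('k) = p" and "\<forall>x::'k. \<exists>n>0. x ^ (p ^ n) = x"
    and "galois_datum p G H I Fr om2 mu"
    and "r < p\<^sup>2 - 1" and "r' < p\<^sup>2 - 1" and "l \<noteq> 0" and "l' \<noteq> 0"
  shows "L_equivalent G H (psi p G H Fr om2 mu r l) (psi p G H Fr om2 mu r' l') \<longleftrightarrow>
         ((r' = r \<and> l' = l) \<or>
          ([int r' = - (int p * int r)] (mod int (p\<^sup>2 - 1)) \<and> l' = inverse l))"
proof -
  interpret psi_setting p G H I Fr om2 mu
    using assms(1,3,5) by unfold_locales
  show ?thesis
  proof
    assume "L_equivalent G H (\<psi> r l) (\<psi> r' l')"
    then consider (same) "\<forall>h\<in>H. chi1 r' l' h = chi1 r l h"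
      | (swapped) "\<forall>h\<in>H. chi1 r' l' h = chi2 r l h"
      by (meson psi_equivalent_chi_cases)
    then show "(r' = r \<and> l' = l) \<or> ([int r' = - (int p * int r)] (mod int (p\<^sup>2 - 1)) \<and> l' = inverse l)"
    proof cases
      case same
      then show ?thesis
        using params_eq_if_chi1_eq[OF assms(6-9)] by blast
    next
      case swapped
      then show ?thesis
        using params_swap_if_chi1_eq_chi2[OF assms(8,9)] by blast
    qed
  next
    assume "(r' = r \<and> l' = l) \<or> ([int r' = - (int p * int r)] (mod int (p\<^sup>2 - 1)) \<and> l' = inverse l)"
    then show "L_equivalent G H (\<psi> r l) (\<psi> r' l')"
      using psi_equivalent_refl psi_equivalent_swap[OF _ assms(8)] by blast
  qed
qed

end
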